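(* Let $K$ be a positive integer, let $T>0$, and set $\omega_0 = \frac{2\pi}{T}$. Let $N$ be an integer and let $0\leq t_1<t_2<\cdots<t_N < T$. Define the $(N-1)\times 2K$ complex matrix $\mathbf{B}$ whose columns are indexed by $k\in\{-K,\dots,-1,1,\dots,K\}$ and whose rows are indexed by $n\in\{1,\dots,N-1\}$, with entries $$\mathbf{B}_{n,k} = e^{jk\omega_0 t_{n+1}} - e^{jk\omega_0 t_{n}} .$$ Then $\mathbf{B}$ is left-invertible (i.e., has full column rank) provided that $N \geq 2K+2$.
   Context: Here $j$ denotes the imaginary unit. *)

theory Defs
  imports "HOL-Analysis.Analysis" "Jordan_Normal_Form.Matrix"
begin

text \<open>Column index i in {0..<2K} corresponds to the frequency index
  k in {-K,...,-1,1,...,K} (in increasing order).\<close>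
definition freq_index :: "nat \<Rightarrow> nat \<Rightarrow> int" where
  "freq_index K i = (if i < K then int i - int K else int i - int K + 1)"

text \<open>The (N-1) x 2K matrix B; row i (0-based) corresponds to n = i+1,
  sampling times t 1, ..., t N.\<close>
definition Bmat :: "nat \<Rightarrow> real \<Rightarrow> nat \<Rightarrow> (nat \<Rightarrow> real) \<Rightarrow> complex mat" where
  "Bmat K T N t = mat (N - 1) (2 * K) (\<lambda>(i, l).
      let k = freq_index K l; \<omega>\<^sub>0 = 2 * pi / T; n = i + 1 in
      exp (\<i> * of_int k * of_real (\<omega>\<^sub>0 * t (n + 1))) - exp (\<i> * of_int k * of_real (\<omega>\<^sub>0 * t n)))"

end

(*
  The first 2K rows of B already form a nonsingular square matrix. If they annihilate v,
  the trigonometric polynomial f(x) = sum_k v_k e^(ikx), which has no constant term, takes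
  one and the same value c at the 2K+1 distinct points x_n = omega_0 t_n of [0, 2 pi),
  n = 1, ..., 2K+1, since the rows of B are the successive differences of these values.
  Multiplied by e^(iKx), f - c becomes a polynomial of degree at most 2K in z = e^(ix)
  with 2K+1 distinct roots z_n, so all its coefficients vanish and v = 0. Inverting the
  upper block and discarding the remaining rows gives the left inverse.
*)
theory Submission
  imports Defs "HOL-Computational_Algebra.Polynomial" "Jordan_Normal_Form.Determinant"
begin

lemma left_inverse_if_upper_block_injective:
  fixes B :: "'a :: field mat"
  assumes B: "B \<in> carrier_mat m n" and "n \<le> m"
    and inj: "\<And>v. v \<in> carrier_vec n \<Longrightarrow> (\<And>i. i < n \<Longrightarrow> (B *\<^sub>v v) $ i = 0) \<Longrightarrow> v = 0\<^sub>v n"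
  shows "\<exists>C \<in> carrier_mat n m. C * B = 1\<^sub>m n"
proof -
  define S :: "'a mat" where "S = mat_of_rows m (map (unit_vec m) [0..<n])"
  have S: "S \<in> carrier_mat n m"
    unfolding S_def using mat_of_rows_carrier(1)[of m "map (unit_vec m) [0..<n]"] by simp
  have SB: "S * B \<in> carrier_mat n n" using S B by simp
  have "det (S * B) \<noteq> 0"
  proof
    assume "det (S * B) = 0"
    then obtain v where v: "v \<in> carrier_vec n" "v \<noteq> 0\<^sub>v n" "S * B *\<^sub>v v = 0\<^sub>v n"
      using det_0_iff_vec_prod_zero_field[OF SB] by blast
    have "(B *\<^sub>v v) $ i = 0" if "i < n" for i
    proof -
      have "(B *\<^sub>v v) $ i = (S *\<^sub>v (B *\<^sub>v v)) $ i"
        using that \<open>n \<le> m\<close> S B v(1) by (simp add: S_def)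
      also have "\<dots> = 0" using v(3) S B v(1) that by simp
      finally show ?thesis .
    qed
    with inj v(1,2) show False by blast
  qed
  then obtain A where A: "A \<in> carrier_mat n n" and "A * (S * B) = 1\<^sub>m n"
    using det_non_zero_imp_unit[OF SB, of "()"] unfolding Units_def ring_mat_def by auto
  then have "A * S * B = 1\<^sub>m n" using S B by (simp add: assoc_mult_mat)
  with A S show ?thesis by (intro bexI[of _ "A * S"]) auto
qed

lemma sum_monomials_vanishing_imp_coeffs_zero:
  fixes a :: "'i \<Rightarrow> 'a :: idom" and e :: "'i \<Rightarrow> nat" and z :: "nat \<Rightarrow> 'a"
  assumes "finite I" and e: "inj_on e I" "e ` I \<subseteq> {..d}" and z: "inj_on z {..d}"
    and vanish: "\<And>n. n \<le> d \<Longrightarrow> (\<Sum>i\<in>I. a i * z n ^ e i) = 0"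
    and "i \<in> I"
  shows "a i = 0"
proof -
  define p where "p = (\<Sum>i\<in>I. monom (a i) (e i))"
  have coeff_p: "coeff p (e i) = a i" if "i \<in> I" for i
  proof -
    have "coeff p (e i) = (\<Sum>j\<in>I. if e j = e i then a j else 0)"
      unfolding p_def by (simp add: coeff_sum coeff_monom)
    also have "\<dots> = (\<Sum>j\<in>{i}. a j)"
      using that e(1) \<open>finite I\<close> by (intro sum.mono_neutral_cong_right) (auto dest: inj_onD)
    finally show ?thesis by simp
  qed
  have "p = 0"
  proof (rule ccontr)
    assume "p \<noteq> 0"
    have "degree p \<le> d"
      unfolding p_def using e(2)
      by (intro degree_sum_le[OF \<open>finite I\<close>])
        (meson atMost_iff degree_monom_le image_subset_iff order_trans)
    have "z ` {..d} \<subseteq> {x. poly p x = 0}"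
      using vanish by (auto simp: p_def poly_sum poly_monom)
    then have "card (z ` {..d}) \<le> card {x. poly p x = 0}"
      using poly_roots_finite[OF \<open>p \<noteq> 0\<close>] by (intro card_mono) auto
    also have "\<dots> \<le> d" using card_poly_roots_bound[OF \<open>p \<noteq> 0\<close>] \<open>degree p \<le> d\<close> by linarith
    finally show False using card_image[OF z] by simp
  qed
  then show ?thesis using coeff_p[OF \<open>i \<in> I\<close>] by simp
qed

lemma exp_int_mult_eq_power:
  fixes y :: real
  assumes "int m = k + int K"
  shows "exp (\<i> * of_int k * of_real y) * exp (\<i> * of_real y) ^ K = exp (\<i> * of_real y) ^ m"
proof -
  have "(of_nat m :: complex) = of_int k + of_nat K"
    using arg_cong[OF assms, of "of_int :: int \<Rightarrow> complex"] by simp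
  then show ?thesis by (simp add: exp_of_nat_mult[symmetric] exp_add[symmetric] algebra_simps)
qed

lemma inj_on_exp_i_period: "inj_on (\<lambda>x. exp (\<i> * of_real x)) {0..<2 * pi}"
  by (rule inj_on_inverseI[of _ "\<lambda>z. Arg2pi z"]) (simp add: Arg2pi_exp)

lemma strict_mono_on_atLeastAtMost_Suc:
  fixes f :: "nat \<Rightarrow> 'a :: order"
  assumes "\<And>n. a \<le> n \<Longrightarrow> n < b \<Longrightarrow> f n < f (Suc n)"
  shows "strict_mono_on {a..b} f"
proof (rule strict_mono_onI)
  fix m n assume "m \<in> {a..b}" "n \<in> {a..b}" "m < n"
  then show "f m < f n"
  proof (induction n)
    case (Suc n)
    then show ?case using assms[of n] by (cases "m = n") (auto intro: less_trans)
  qed simp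
qed

definition trig_poly :: "nat \<Rightarrow> (nat \<Rightarrow> complex) \<Rightarrow> real \<Rightarrow> complex" where
  "trig_poly K v y = (\<Sum>l<2 * K. v l * exp (\<i> * of_int (freq_index K l) * of_real y))"

definition freq_exponent :: "nat \<Rightarrow> nat \<Rightarrow> nat" where
  "freq_exponent K l = (if l < K then l else Suc l)"

lemma int_freq_exponent: "int (freq_exponent K l) = freq_index K l + int K"
  by (simp add: freq_exponent_def freq_index_def)

lemma trig_poly_const_imp_coeffs_zero:
  fixes x :: "nat \<Rightarrow> real"
  assumes x: "inj_on x {..2 * K}" "x ` {..2 * K} \<subseteq> {0..<2 * pi}"
    and const: "\<And>n. n \<le> 2 * K \<Longrightarrow> trig_poly K v (x n) = c"
    and "l < 2 * K"
  shows "v l = 0"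
proof -
  define z where "z n = exp (\<i> * of_real (x n))" for n
  define e where "e l = (if l < 2 * K then freq_exponent K l else K)" for l
  define a where "a l = (if l < 2 * K then v l else - c)" for l
  \<comment> \<open>the extra index \<open>2 * K\<close> carries the constant term \<open>- c\<close>, at exponent \<open>K\<close>\<close>
  have "inj_on z {..2 * K}"
    unfolding z_def using comp_inj_on[OF x(1) inj_on_subset[OF inj_on_exp_i_period x(2)]]
    by (simp add: comp_def)
  moreover have "inj_on e {..2 * K}" "e ` {..2 * K} \<subseteq> {..2 * K}"
    by (auto simp: e_def freq_exponent_def inj_on_def split: if_splits)
  moreover have "(\<Sum>l\<le>2 * K. a l * z n ^ e l) = 0" if "n \<le> 2 * K" for n
  proof -
    have "(\<Sum>l\<le>2 * K. a l * z n ^ e l) = (\<Sum>l<2 * K. v l * z n ^ freq_exponent K l) - c * z n ^ K"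
      unfolding lessThan_Suc_atMost[symmetric] sum.lessThan_Suc
      by (simp add: a_def e_def)
    also have "\<dots> = (trig_poly K v (x n) - c) * z n ^ K"
      unfolding trig_poly_def z_def
      by (simp add: exp_int_mult_eq_power[OF int_freq_exponent, symmetric] sum_distrib_right
          mult.assoc left_diff_distrib)
    finally show ?thesis using const[OF that] by simp
  qed
  ultimately have "a l = 0"
    by (intro sum_monomials_vanishing_imp_coeffs_zero[of "{..2 * K}" e "2 * K" z a])
      (use \<open>l < 2 * K\<close> in auto)
  with \<open>l < 2 * K\<close> show ?thesis by (simp add: a_def)
qed

lemma Bmat_mult_vec_nth:
  assumes "i < N - 1" and "v \<in> carrier_vec (2 * K)"
  shows "(Bmat K T N t *\<^sub>v v) $ i
    = trig_poly K (($) v) (2 * pi / T * t (i + 2)) - trig_poly K (($) v) (2 * pi / T * t (i + 1))"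
  unfolding trig_poly_def sum_subtractf[symmetric]
  using assms
  by (auto simp: Bmat_def Let_def scalar_prod_def lessThan_atLeast0 algebra_simps intro: sum.cong)

lemma Bmat_upper_block_injective:
  assumes "T > 0" and "0 \<le> t 1" and "t N < T" and mono: "strict_mono_on {1..N} t"
    and "2 * K < N" and v: "v \<in> carrier_vec (2 * K)"
    and kernel: "\<And>i. i < 2 * K \<Longrightarrow> (Bmat K T N t *\<^sub>v v) $ i = 0"
  shows "v = 0\<^sub>v (2 * K)"
proof -
  define x where "x n = 2 * pi / T * t (Suc n)" for n
  have "trig_poly K (($) v) (x n) = trig_poly K (($) v) (x 0)" if "n \<le> 2 * K" for n
  proof -
    have "trig_poly K (($) v) (x n) - trig_poly K (($) v) (x 0)
        = (\<Sum>i<n. trig_poly K (($) v) (x (Suc i)) - trig_poly K (($) v) (x i))"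
      by (rule sum_lessThan_telescope[symmetric])
    also have "\<dots> = (\<Sum>i<n. (Bmat K T N t *\<^sub>v v) $ i)"
      using that \<open>2 * K < N\<close> v by (intro sum.cong) (simp_all add: Bmat_mult_vec_nth x_def)
    also have "\<dots> = 0" using that kernel by simp
    finally show ?thesis by simp
  qed
  moreover have "inj_on x {..2 * K}"
  proof
    fix m n assume "m \<in> {..2 * K}" "n \<in> {..2 * K}" "x m = x n"
    then have "Suc m \<in> {1..N}" "Suc n \<in> {1..N}" "t (Suc m) = t (Suc n)"
      using \<open>T > 0\<close> \<open>2 * K < N\<close> by (auto simp: x_def)
    then show "m = n" using strict_mono_on_imp_inj_on[OF mono] by (auto dest: inj_onD)
  qed
  moreover have "x n \<in> {0..<2 * pi}" if "n \<le> 2 * K" for n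
  proof -
    have "t 1 \<le> t (Suc n)" "t (Suc n) \<le> t N"
      using strict_mono_on_less_eq[OF mono] that \<open>2 * K < N\<close> by auto
    then have "0 \<le> t (Suc n)" "t (Suc n) < T" using assms(2,3) by auto
    then show ?thesis by (auto simp: x_def field_simps)
  qed
  ultimately have "v $ l = 0" if "l < 2 * K" for l
    using trig_poly_const_imp_coeffs_zero that by blast
  with v show ?thesis by (intro eq_vecI) auto
qed

theorem theorem3:
  fixes K N :: nat and T :: real and t :: "nat \<Rightarrow> real"
  assumes "K \<ge> 1" and "T > 0"
    and "0 \<le> t 1"
    and "\<And>n. 1 \<le> n \<Longrightarrow> n < N \<Longrightarrow> t n < t (Suc n)"
    and "t N < T"
    and "N \<ge> 2 * K + 2"
  shows "\<exists>C \<in> carrier_mat (2 * K) (N - 1). C * Bmat K T N t = 1\<^sub>m (2 * K)"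
proof (rule left_inverse_if_upper_block_injective)
  show "Bmat K T N t \<in> carrier_mat (N - 1) (2 * K)" by (simp add: Bmat_def)
  show "2 * K \<le> N - 1" using \<open>N \<ge> 2 * K + 2\<close> by simp
  have "strict_mono_on {1..N} t"
    using assms(4) by (rule strict_mono_on_atLeastAtMost_Suc)
  then show "v = 0\<^sub>v (2 * K)"
    if "v \<in> carrier_vec (2 * K)" "\<And>i. i < 2 * K \<Longrightarrow> (Bmat K T N t *\<^sub>v v) $ i = 0" for v
    using Bmat_upper_block_injective[of T t N K v] assms that by simp
qed

end
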